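(* Let $\mathcal{S}\subset\mathbb{T}$ be a measurable set of positive Lebesgue measure. Then there exists a constant $\gamma=\gamma(\mathcal{S})>0$ such that for every $\alpha>1$ there exists $N(\alpha)\in\mathbb{N}$ with the following property: for every integer $N\ge N(\alpha)$ there is $\ell\in\mathbb{N}$ with $\ell<N^{\alpha}$ such that $\gamma$ is a lower Riesz bound in $L^2(\mathcal{S})$ for $E(\{\ell,2\ell,\ldots,N\ell\})$.
   Context: $\mathbb{T}=\mathbb{R}/2\pi\mathbb{Z}$. For $B\subset\mathbb{Z}$, $E(B):=\{e^{i\lambda t}\}_{\lambda\in B}$. A positive number $\gamma$ is a lower Riesz bound in $L^2(\mathcal{S})$ for $E(B)$ if $\int_{\mathcal{S}}\big|\sum_{\lambda\in B}c(\lambda)e^{i\lambda t}\big|^2\frac{dt}{2\pi}\ge\gamma\sum_{\lambda\in B}|c(\lambda)|^2$ for every finite sequence of scalars $\{c(\lambda)\}_{\lambda\in B}$. *)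

theory Defs
  imports "HOL-Analysis.Analysis"
begin

text \<open>The torus T = R/2piZ is identified with the fundamental domain [0,2pi),
  with normalized Lebesgue measure dt/(2 pi).\<close>

definition lower_riesz_bound :: "real set \<Rightarrow> int set \<Rightarrow> real \<Rightarrow> bool" where
  "lower_riesz_bound S B \<gamma> \<longleftrightarrow> \<gamma> > 0 \<and>
     (\<forall>c :: int \<Rightarrow> complex.
        (LINT t:S|lebesgue. (cmod (\<Sum>m\<in>B. c m * exp (\<i> * of_int m * of_real t)))\<^sup>2 / (2 * pi))
          \<ge> \<gamma> * (\<Sum>m\<in>B. (cmod (c m))\<^sup>2))"

end

theory Submission
  imports Defs "HOL-Computational_Algebra.Primes" "HOL-Library.Landau_Symbols"
begin

text \<open>Expanding the square, \<open>\<integral>\<^sub>S |\<Sum>\<^sub>k c\<^sub>k exp (i k l t)|\<^sup>2\<close> is \<open>|S| \<Sum>\<^sub>k |c\<^sub>k|\<^sup>2\<close>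
  plus off-diagonal terms weighted by the coefficients \<open>\<integral>\<^sub>S exp (i d l t)\<close>, \<open>0 < |d| \<le> N\<close>.
  By Schur's test the lower Riesz bound \<open>|S| / (4 pi)\<close> holds as soon as these \<open>2 N\<close>
  coefficients have absolute sum at most \<open>|S| / 2\<close>. A good \<open>l\<close> below \<open>M \<approx> N powr \<alpha>\<close> is found by
  averaging: as \<open>(l, d)\<close> ranges over \<open>[1, M] \<times> [-N, N]\<close>, each frequency \<open>n = d l\<close> occurs at
  most (number of divisors of \<open>|n|\<close>) \<open>= O((N M) powr \<epsilon>)\<close> times, so Bessel's inequality bounds
  the sum over all \<open>l\<close> of the squared coefficients by \<open>O((N M) powr \<epsilon> |S|)\<close>. Cauchy-Schwarz
  over \<open>d\<close> then produces a good \<open>l\<close> once \<open>N (N M) powr \<epsilon> = o(M)\<close>, which holds for small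
  \<open>\<epsilon>\<close> because \<open>\<alpha> > 1\<close>.\<close>

section \<open>The divisor bound\<close>

definition divisor_count :: "nat \<Rightarrow> nat" where
  "divisor_count n = card {k. k dvd n}"

lemma divisor_count_prime_power_mult_le:
  assumes p: "prime p" and b: "b > 0" and ndvd: "\<not> p dvd b"
  shows "divisor_count (p ^ a * b) \<le> (a + 1) * divisor_count b"
proof -
  have n0: "p ^ a * b \<noteq> 0"
    using p b by (simp add: prime_gt_0_nat)
  have "{k. k dvd p ^ a * b} \<subseteq> (\<lambda>(i, e). p ^ i * e) ` ({0..a} \<times> {e. e dvd b})"
  proof
    fix k assume "k \<in> {k. k dvd p ^ a * b}"
    hence kdvd: "k dvd p ^ a * b" by simp
    define i where "i = multiplicity p k"
    define e where "e = k div p ^ i"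
    have k: "k = p ^ i * e"
      unfolding e_def i_def using multiplicity_dvd[of p k] by simp
    have "\<not> p dvd e"
      unfolding e_def i_def using kdvd n0 p not_prime_unit
      by (intro multiplicity_decompose) (auto intro: Nat.gr0I)
    hence "coprime e p"
      using p by (metis coprime_commute prime_imp_coprime)
    hence "coprime e (p ^ a)"
      by simp
    moreover have "e dvd p ^ a * b"
      using kdvd k by (metis dvd_mult_right)
    ultimately have "e dvd b"
      by (simp add: coprime_dvd_mult_right_iff)
    moreover have "multiplicity p (p ^ a * b) = a"
      using ndvd p b by (intro multiplicity_decomposeI) (auto simp: prime_gt_0_nat)
    hence "i \<le> a"
      unfolding i_def using dvd_imp_multiplicity_le[OF kdvd n0, of p] by simp
    ultimately show "k \<in> (\<lambda>(i, e). p ^ i * e) ` ({0..a} \<times> {e. e dvd b})"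
      using k by force
  qed
  moreover have fin: "finite ({0..a} \<times> {e. e dvd b})"
    using b by simp
  ultimately have "divisor_count (p ^ a * b) \<le> card ((\<lambda>(i, e). p ^ i * e) ` ({0..a} \<times> {e. e dvd b}))"
    unfolding divisor_count_def by (intro card_mono finite_imageI)
  also have "\<dots> \<le> card ({0..a} \<times> {e. e dvd b})"
    by (rule card_image_le[OF fin])
  finally show ?thesis
    by (simp add: card_cartesian_product divisor_count_def)
qed

lemma Suc_le_const_mult_powr:
  fixes p \<epsilon> :: real
  assumes "\<epsilon> > 0" and "p \<ge> 2"
  shows "real a + 1 \<le> max 1 (1 / (\<epsilon> * ln 2)) * p powr (real a * \<epsilon>)"
proof -
  define K where "K = max 1 (1 / (\<epsilon> * ln 2))"
  have "real a + 1 \<le> K * (1 + real a * \<epsilon> * ln 2)"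
  proof -
    have "real a = 1 / (\<epsilon> * ln 2) * (real a * \<epsilon> * ln 2)"
      using assms by simp
    also have "\<dots> \<le> K * (real a * \<epsilon> * ln 2)"
      unfolding K_def using assms by (intro mult_right_mono) auto
    finally show ?thesis
      unfolding K_def by (simp add: algebra_simps)
  qed
  also have "1 + real a * \<epsilon> * ln 2 \<le> exp (real a * \<epsilon> * ln 2)"
    by (rule exp_ge_add_one_self)
  also have "exp (real a * \<epsilon> * ln 2) = 2 powr (real a * \<epsilon>)"
    by (simp add: powr_def)
  also have "\<dots> \<le> p powr (real a * \<epsilon>)"
    using assms by (intro powr_mono2) auto
  finally show ?thesis
    unfolding K_def by (simp add: mult_left_mono)
qed

lemma Suc_le_powr_of_large:
  fixes p \<epsilon> :: real
  assumes "\<epsilon> > 0" and "p \<ge> 2 powr (1 / \<epsilon>)"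
  shows "real a + 1 \<le> p powr (real a * \<epsilon>)"
proof -
  have p0: "p > 0"
    using assms(2) by (smt (verit) powr_gt_zero)
  have "2 = (2 powr (1 / \<epsilon>)) powr \<epsilon>"
    using assms(1) by (simp add: powr_powr)
  also have "\<dots> \<le> p powr \<epsilon>"
    using assms by (intro powr_mono2) auto
  finally have "2 \<le> p powr \<epsilon>" .
  have "real a + 1 \<le> 2 ^ a"
    by (induction a) auto
  also have "\<dots> \<le> (p powr \<epsilon>) ^ a"
    using \<open>2 \<le> p powr \<epsilon>\<close> by (intro power_mono) auto
  also have "\<dots> = p powr (real a * \<epsilon>)"
    using p0 by (simp add: powr_realpow[symmetric] powr_powr mult.commute)
  finally show ?thesis .
qed

lemma Suc_le_weighted_powr:
  fixes p \<epsilon> :: real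
  assumes "\<epsilon> > 0" and "p \<ge> 2"
  shows "real a + 1 \<le> (if p < 2 powr (1 / \<epsilon>) then max 1 (1 / (\<epsilon> * ln 2)) else 1) * p powr (real a * \<epsilon>)"
  using Suc_le_const_mult_powr[OF assms] Suc_le_powr_of_large[OF assms(1)] by auto

definition small_prime_divisors :: "real \<Rightarrow> nat \<Rightarrow> nat set" where
  "small_prime_divisors \<epsilon> n = {p. prime p \<and> p dvd n \<and> real p < 2 powr (1 / \<epsilon>)}"

lemma small_prime_divisors_subset: "small_prime_divisors \<epsilon> n \<subseteq> {..<nat \<lceil>2 powr (1 / \<epsilon>)\<rceil>}"
  unfolding small_prime_divisors_def by auto linarith

lemma small_prime_divisors_prime_power_mult:
  assumes "prime p" and "a \<ge> 1" and "\<not> p dvd b"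
  shows "small_prime_divisors \<epsilon> (p ^ a * b)
           = (if real p < 2 powr (1 / \<epsilon>) then insert p (small_prime_divisors \<epsilon> b)
              else small_prime_divisors \<epsilon> b)"
    and "p \<notin> small_prime_divisors \<epsilon> b"
proof -
  have "q dvd p ^ a * b \<longleftrightarrow> q = p \<or> q dvd b" if "prime q" for q
    using that assms by (auto simp: prime_dvd_mult_iff prime_dvd_power_iff primes_dvd_imp_eq)
  thus "small_prime_divisors \<epsilon> (p ^ a * b)
          = (if real p < 2 powr (1 / \<epsilon>) then insert p (small_prime_divisors \<epsilon> b)
             else small_prime_divisors \<epsilon> b)"
    unfolding small_prime_divisors_def using assms(1) by auto
  show "p \<notin> small_prime_divisors \<epsilon> b"
    unfolding small_prime_divisors_def using assms(3) by auto
qed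

text \<open>Only primes below \<open>2 powr (1 / \<epsilon>)\<close> can have \<open>a + 1 > p powr (a \<epsilon>)\<close>, and each of
  them costs at most the constant factor \<open>max 1 (1 / (\<epsilon> ln 2))\<close>.\<close>

lemma divisor_count_le_powr_small_primes:
  assumes "\<epsilon> > 0" and "n > 0"
  shows "real (divisor_count n) \<le> max 1 (1 / (\<epsilon> * ln 2)) ^ card (small_prime_divisors \<epsilon> n) * real n powr \<epsilon>"
  using assms(2)
proof (induction n rule: less_induct)
  case (less n)
  define K where "K = max 1 (1 / (\<epsilon> * ln 2))"
  define w where "w p = (if real p < 2 powr (1 / \<epsilon>) then K else 1)" for p :: nat
  show ?case
  proof (cases "n = 1")
    case True
    then show ?thesis
      by (simp add: divisor_count_def)
  next
    case False
    then obtain p where p: "prime p" "p dvd n"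
      using prime_factor_nat by blast
    have pu: "\<not> is_unit p"
      using p(1) not_prime_unit by blast
    define a where "a = multiplicity p n"
    obtain b where n: "n = p ^ a * b" and ndvd: "\<not> p dvd b"
      using multiplicity_decompose'[OF _ pu] less.prems unfolding a_def by blast
    have "a \<ge> 1"
      unfolding a_def using p less.prems multiplicity_gt_zero_iff[OF _ pu]
      by (metis less_one not_le not_gr0)
    have "b > 0"
      using n less.prems by (auto intro: Nat.gr0I)
    have "p \<ge> 2"
      using p by (simp add: prime_ge_2_nat)
    have "p ^ 1 \<le> p ^ a"
      using \<open>p \<ge> 2\<close> \<open>a \<ge> 1\<close> by (intro power_increasing) auto
    hence "b < n"
      using n \<open>b > 0\<close> \<open>p \<ge> 2\<close> by (simp add: less_le_trans[OF _ mult_le_mono1[of "p" "p ^ a" b]])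
    hence IH: "real (divisor_count b) \<le> K ^ card (small_prime_divisors \<epsilon> b) * real b powr \<epsilon>"
      using less.IH \<open>b > 0\<close> unfolding K_def by blast
    have "real (divisor_count n) \<le> (real a + 1) * real (divisor_count b)"
      using divisor_count_prime_power_mult_le[OF p(1) \<open>b > 0\<close> ndvd, of a] n
      by (metis of_nat_1 of_nat_add of_nat_mono of_nat_mult)
    also have "\<dots> \<le> (w p * real p powr (real a * \<epsilon>)) * (K ^ card (small_prime_divisors \<epsilon> b) * real b powr \<epsilon>)"
      using Suc_le_weighted_powr[OF \<open>\<epsilon> > 0\<close>, of p a] \<open>p \<ge> 2\<close> IH
      unfolding w_def K_def by (intro mult_mono) auto
    also have "w p * K ^ card (small_prime_divisors \<epsilon> b) = K ^ card (small_prime_divisors \<epsilon> n)"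
      using small_prime_divisors_prime_power_mult[OF p(1) \<open>a \<ge> 1\<close> ndvd, of \<epsilon>]
        finite_subset[OF small_prime_divisors_subset] unfolding n w_def by simp
    hence "(w p * real p powr (real a * \<epsilon>)) * (K ^ card (small_prime_divisors \<epsilon> b) * real b powr \<epsilon>)
             = K ^ card (small_prime_divisors \<epsilon> n) * (real p powr (real a * \<epsilon>) * real b powr \<epsilon>)"
      by (simp add: algebra_simps)
    also have "real p powr (real a * \<epsilon>) * real b powr \<epsilon> = real n powr \<epsilon>"
      using \<open>p \<ge> 2\<close> by (simp add: n powr_mult powr_realpow[symmetric] powr_powr)
    finally show ?thesis
      unfolding K_def .
  qed
qed

lemma divisor_count_le_powr:
  assumes "\<epsilon> > 0"
  obtains C where "C > 0" and "\<And>n. n > 0 \<Longrightarrow> real (divisor_count n) \<le> C * real n powr \<epsilon>"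
proof
  define K where "K = max 1 (1 / (\<epsilon> * ln 2))"
  define P where "P = nat \<lceil>2 powr (1 / \<epsilon>)\<rceil>"
  show "K ^ P > 0"
    unfolding K_def by simp
  fix n :: nat assume "n > 0"
  have "card (small_prime_divisors \<epsilon> n) \<le> P"
    using card_mono[OF _ small_prime_divisors_subset] unfolding P_def by simp
  hence "K ^ card (small_prime_divisors \<epsilon> n) \<le> K ^ P"
    unfolding K_def by (intro power_increasing) auto
  thus "real (divisor_count n) \<le> K ^ P * real n powr \<epsilon>"
    using divisor_count_le_powr_small_primes[OF assms \<open>n > 0\<close>] unfolding K_def
    by (smt (verit) mult_right_mono powr_ge_zero)
qed

section \<open>Exponentials on the circle\<close>

definition exp_freq :: "int \<Rightarrow> real \<Rightarrow> complex" where
  "exp_freq n t = exp (\<i> * of_int n * of_real t)"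

text \<open>\<open>2 pi\<close> times the Fourier coefficient of the indicator of \<open>A\<close> at \<open>-n\<close>.\<close>

definition set_exp_integral :: "real set \<Rightarrow> int \<Rightarrow> complex" where
  "set_exp_integral A n = (LINT t:A|lebesgue. exp_freq n t)"

lemma exp_freq_zero [simp]: "exp_freq 0 = (\<lambda>_. 1)"
  by (simp add: exp_freq_def fun_eq_iff)

lemma exp_freq_mult: "exp_freq m t * exp_freq n t = exp_freq (m + n) t"
  unfolding exp_freq_def by (simp add: exp_add[symmetric] algebra_simps)

lemma cnj_exp_freq: "cnj (exp_freq n t) = exp_freq (- n) t"
  unfolding exp_freq_def by (simp add: exp_cnj)

lemma norm_exp_freq [simp]: "norm (exp_freq n t) = 1"
proof -
  have "exp_freq n t = exp (\<i> * of_real (real_of_int n * t))"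
    unfolding exp_freq_def by (simp add: mult.assoc)
  thus ?thesis
    by simp
qed

lemma borel_measurable_exp_freq [measurable]: "exp_freq n \<in> borel_measurable lebesgue"
proof -
  have "continuous_on UNIV (exp_freq n)"
    unfolding exp_freq_def by (intro continuous_intros)
  hence "exp_freq n \<in> borel_measurable lborel"
    by (simp add: borel_measurable_continuous_onI)
  thus ?thesis
    by (rule measurable_completion)
qed

lemma lmeasurable_atLeastLessThan: "{a..<b::real} \<in> lmeasurable"
  by (rule fmeasurableI2[of "{a..b}"]) auto

lemma set_integrable_bounded:
  fixes g :: "real \<Rightarrow> 'b::{banach, second_countable_topology}"
  assumes "A \<in> lmeasurable" and "g \<in> borel_measurable lebesgue" and "\<And>t. norm (g t) \<le> B"
  shows "set_integrable lebesgue A g"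
proof (rule set_integrable_bound)
  show "set_integrable lebesgue A (\<lambda>_. B)"
    using assms(1) by (rule absolutely_integrable_on_const)
  have "A \<in> sets lebesgue"
    using assms(1) by (rule fmeasurableD)
  thus "set_borel_measurable lebesgue A g"
    using assms(2) unfolding set_borel_measurable_def by measurable
  show "AE t in lebesgue. t \<in> A \<longrightarrow> norm (g t) \<le> norm B"
    using assms(3) by (auto intro: order_trans[OF _ abs_ge_self])
qed

lemma set_integral_sum_exp_freq:
  assumes "A \<in> lmeasurable"
  shows "(LINT t:A|lebesgue. (\<Sum>i\<in>I. a i * exp_freq (w i) t)) = (\<Sum>i\<in>I. a i * set_exp_integral A (w i))"
proof -
  have "set_integrable lebesgue A (\<lambda>t. a i * exp_freq (w i) t)" for i
    using assms by (rule set_integrable_bounded[where B = "cmod (a i)"]) (auto simp: norm_mult)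
  hence "(LINT t:A|lebesgue. (\<Sum>i\<in>I. a i * exp_freq (w i) t))
           = (\<Sum>i\<in>I. LINT t:A|lebesgue. a i * exp_freq (w i) t)"
    unfolding set_lebesgue_integral_def set_integrable_def scaleR_sum_right
    by (rule Bochner_Integration.integral_sum)
  also have "\<dots> = (\<Sum>i\<in>I. a i * set_exp_integral A (w i))"
    unfolding set_exp_integral_def by (simp add: set_integral_mult_right)
  finally show ?thesis .
qed

lemma set_integral_norm_sum_exp_freq_sq:
  assumes "A \<in> lmeasurable"
  shows "complex_of_real (LINT t:A|lebesgue. (cmod (\<Sum>i\<in>I. c i * exp_freq (w i) t))\<^sup>2)
           = (\<Sum>i\<in>I. \<Sum>j\<in>I. c i * cnj (c j) * set_exp_integral A (w i - w j))"
proof -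
  have sq: "complex_of_real ((cmod (\<Sum>i\<in>I. c i * exp_freq (w i) t))\<^sup>2)
              = (\<Sum>ij\<in>I \<times> I. (c (fst ij) * cnj (c (snd ij))) * exp_freq (w (fst ij) - w (snd ij)) t)" for t
  proof -
    have "complex_of_real ((cmod (\<Sum>i\<in>I. c i * exp_freq (w i) t))\<^sup>2)
            = (\<Sum>i\<in>I. c i * exp_freq (w i) t) * (\<Sum>j\<in>I. cnj (c j) * exp_freq (- w j) t)"
      unfolding complex_norm_square by (simp add: cnj_exp_freq)
    also have "\<dots> = (\<Sum>i\<in>I. \<Sum>j\<in>I. c i * cnj (c j) * (exp_freq (w i) t * exp_freq (- w j) t))"
      by (simp add: sum_product algebra_simps)
    finally show ?thesis
      by (simp add: exp_freq_mult sum.cartesian_product case_prod_beta)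
  qed
  have "complex_of_real (LINT t:A|lebesgue. (cmod (\<Sum>i\<in>I. c i * exp_freq (w i) t))\<^sup>2)
          = (LINT t:A|lebesgue. complex_of_real ((cmod (\<Sum>i\<in>I. c i * exp_freq (w i) t))\<^sup>2))"
    by (rule set_integral_complex_of_real[symmetric])
  also have "\<dots> = (\<Sum>ij\<in>I \<times> I. (c (fst ij) * cnj (c (snd ij))) * set_exp_integral A (w (fst ij) - w (snd ij)))"
    unfolding sq by (rule set_integral_sum_exp_freq[OF assms])
  finally show ?thesis
    by (simp add: sum.cartesian_product case_prod_beta)
qed

lemma has_integral_exp_mult_of_real:
  fixes c :: complex
  assumes "c \<noteq> 0" and "a \<le> b"
  shows "((\<lambda>t. exp (c * of_real t)) has_integral (exp (c * of_real b) - exp (c * of_real a)) / c) {a..b}"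
proof -
  have "((\<lambda>z. exp (c * z) / c) has_field_derivative exp (c * of_real t)) (at (of_real t) within Z)" for t Z
    using assms(1) by (auto intro!: derivative_eq_intros)
  hence "((\<lambda>t. exp (c * of_real t) / c) has_vector_derivative exp (c * of_real t)) (at t within {a..b})" for t
    using has_complex_derivative_imp_has_vector_derivative[of "\<lambda>z. exp (c * z) / c"] by (simp add: o_def)
  hence "((\<lambda>t. exp (c * of_real t)) has_integral exp (c * of_real b) / c - exp (c * of_real a) / c) {a..b}"
    by (intro fundamental_theorem_of_calculus assms(2))
  thus ?thesis
    by (simp add: diff_divide_distrib)
qed

lemma set_exp_integral_period: "set_exp_integral {0..<2*pi} n = (if n = 0 then 2 * pi else 0)"
proof -
  have "set_integrable lebesgue {0..<2*pi} (exp_freq n)"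
    by (rule set_integrable_bounded[where B = 1]) (auto simp: lmeasurable_atLeastLessThan)
  hence "(exp_freq n has_integral set_exp_integral {0..<2*pi} n) {0..<2*pi}"
    unfolding set_exp_integral_def by (rule has_integral_set_lebesgue)
  hence "(exp_freq n has_integral set_exp_integral {0..<2*pi} n) {0..2*pi}"
    by (subst (asm) has_integral_spike_set_eq[where T = "{0..2*pi}"])
       (auto intro: negligible_subset[of "{2*pi}"])
  moreover have "(exp_freq n has_integral (if n = 0 then 2 * pi else 0)) {0..2*pi}"
  proof (cases "n = 0")
    case True
    then show ?thesis
      using has_integral_const_real[of "1::complex" 0 "2*pi"] by (simp add: scaleR_conv_of_real)
  next
    case False
    have "exp (\<i> * of_int n * of_real (2 * pi)) = 1"
      using exp_integer_2pi[of "of_int n"] by (simp add: algebra_simps)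
    thus ?thesis
      using False has_integral_exp_mult_of_real[of "\<i> * of_int n" 0 "2 * pi"]
      by (simp add: exp_freq_def[abs_def])
  qed
  ultimately show ?thesis
    by (rule has_integral_unique)
qed

lemma set_exp_integral_zero:
  assumes "A \<in> lmeasurable"
  shows "set_exp_integral A 0 = complex_of_real (measure lebesgue A)"
  using fmeasurableD[OF assms] fmeasurableD2[OF assms]
  by (simp add: set_exp_integral_def set_integral_const scaleR_conv_of_real)

lemma set_exp_integral_uminus: "set_exp_integral A (- n) = cnj (set_exp_integral A n)"
  unfolding set_exp_integral_def set_lebesgue_integral_def
  by (simp add: cnj_exp_freq[symmetric] scaleR_conv_of_real flip: Bochner_Integration.integral_cnj)

lemma set_integral_norm_sum_exp_freq_sq_period:
  assumes "finite F"
  shows "(LINT t:{0..<2*pi}|lebesgue. (cmod (\<Sum>n\<in>F. a n * exp_freq n t))\<^sup>2) = 2 * pi * (\<Sum>n\<in>F. (cmod (a n))\<^sup>2)"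
proof -
  have "complex_of_real (LINT t:{0..<2*pi}|lebesgue. (cmod (\<Sum>n\<in>F. a n * exp_freq (id n) t))\<^sup>2)
          = (\<Sum>i\<in>F. \<Sum>j\<in>F. a i * cnj (a j) * set_exp_integral {0..<2*pi} (id i - id j))"
    by (rule set_integral_norm_sum_exp_freq_sq[OF lmeasurable_atLeastLessThan])
  also have "\<dots> = (\<Sum>i\<in>F. \<Sum>j\<in>F. if j = i then a i * cnj (a i) * (2 * pi) else 0)"
    by (intro sum.cong refl) (auto simp: set_exp_integral_period)
  also have "\<dots> = (\<Sum>i\<in>F. complex_of_real (2 * pi * (cmod (a i))\<^sup>2))"
    using assms by (simp add: complex_norm_square[symmetric] mult.commute)
  finally show ?thesis
    by (simp only: id_def of_real_sum[symmetric] sum_distrib_left[symmetric] of_real_eq_iff)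
qed

text \<open>The weighted AM-GM bound \<open>|P| \<le> pi + |P|\<^sup>2 / (4 pi)\<close> lets Parseval on the full
  period stand in for the Cauchy-Schwarz inequality on \<open>S\<close>.\<close>

lemma sum_norm_set_exp_integral_sq_le:
  assumes "S \<in> sets lebesgue" and "S \<subseteq> {0..<2*pi}" and "finite F"
  shows "(\<Sum>n\<in>F. (cmod (set_exp_integral S n))\<^sup>2) \<le> 2 * pi * measure lebesgue S"
proof -
  define Y where "Y = (\<Sum>n\<in>F. (cmod (set_exp_integral S n))\<^sup>2)"
  define P where "P t = (\<Sum>n\<in>F. cnj (set_exp_integral S n) * exp_freq n t)" for t
  define B where "B = (\<Sum>n\<in>F. cmod (set_exp_integral S n))"
  have Y_nonneg: "Y \<ge> 0"
    unfolding Y_def by (intro sum_nonneg) simp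
  have S: "S \<in> lmeasurable"
    by (rule fmeasurableI2[OF lmeasurable_atLeastLessThan assms(2,1)])
  have P_le: "norm (P t) \<le> B" for t
    unfolding P_def B_def by (rule order.trans[OF norm_sum]) (simp add: norm_mult)
  have P_meas: "P \<in> borel_measurable lebesgue"
    unfolding P_def by measurable
  have int_norm_P: "set_integrable lebesgue S (\<lambda>t. cmod (P t))"
    using S P_meas P_le by (intro set_integrable_bounded[where B = B]) auto
  have int_norm_P_sq: "set_integrable lebesgue A (\<lambda>t. (cmod (P t))\<^sup>2)" if "A \<in> lmeasurable" for A
    using that P_meas P_le by (intro set_integrable_bounded[where B = "B\<^sup>2"]) (auto intro: power_mono)
  have "(LINT t:S|lebesgue. (cmod (P t))\<^sup>2) \<le> (LINT t:{0..<2*pi}|lebesgue. (cmod (P t))\<^sup>2)"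
    using int_norm_P_sq[OF S] int_norm_P_sq[OF lmeasurable_atLeastLessThan] assms(2)
    unfolding set_integrable_def set_lebesgue_integral_def
    by (intro integral_mono) (auto split: split_indicator)
  also have "\<dots> = 2 * pi * Y"
    unfolding P_def Y_def using assms(3) by (simp add: set_integral_norm_sum_exp_freq_sq_period)
  finally have norm_P_sq_le: "(LINT t:S|lebesgue. (cmod (P t))\<^sup>2) \<le> 2 * pi * Y" .
  have int_const: "(LINT t:S|lebesgue. pi) = pi * measure lebesgue S"
    using S by (subst set_integral_const) (auto simp: fmeasurable_def)
  have "complex_of_real Y = (\<Sum>n\<in>F. cnj (set_exp_integral S n) * set_exp_integral S n)"
    unfolding Y_def of_real_sum complex_norm_square by (simp add: mult.commute)
  also have "\<dots> = (LINT t:S|lebesgue. P t)"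
    unfolding P_def by (rule set_integral_sum_exp_freq[OF S, symmetric])
  finally have Y_eq: "complex_of_real Y = (LINT t:S|lebesgue. P t)" .
  have "Y = norm (LINT t:S|lebesgue. P t)"
    using Y_nonneg by (simp flip: Y_eq)
  also have "\<dots> \<le> (LINT t:S|lebesgue. cmod (P t))"
    using S P_meas P_le by (intro set_integral_norm_bound set_integrable_bounded[where B = B]) auto
  also have "\<dots> \<le> (LINT t:S|lebesgue. pi + (cmod (P t))\<^sup>2 / (4 * pi))"
  proof (rule set_integral_mono[OF int_norm_P])
    show "set_integrable lebesgue S (\<lambda>t. pi + (cmod (P t))\<^sup>2 / (4 * pi))"
      using S int_norm_P_sq[OF S] absolutely_integrable_on_const[OF S]
      by (intro set_integral_add set_integrable_divide) auto
    fix t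
    have "4 * pi * cmod (P t) \<le> 4 * pi * pi + (cmod (P t))\<^sup>2"
      using zero_le_power2[of "cmod (P t) - 2 * pi"] by (simp add: power2_eq_square algebra_simps)
    thus "cmod (P t) \<le> pi + (cmod (P t))\<^sup>2 / (4 * pi)"
      by (auto simp: field_simps)
  qed
  also have "\<dots> = pi * measure lebesgue S + (LINT t:S|lebesgue. (cmod (P t))\<^sup>2) / (4 * pi)"
    using set_integral_add(2)[OF absolutely_integrable_on_const[OF S] set_integrable_divide[OF int_norm_P_sq[OF S]]]
      int_const by simp
  also have "\<dots> \<le> pi * measure lebesgue S + 2 * pi * Y / (4 * pi)"
    using divide_right_mono[OF norm_P_sq_le, of "4 * pi"] by simp
  finally show ?thesis
    unfolding Y_def by simp
qed

section \<open>Lower Riesz bounds for dilated progressions\<close>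

lemma sum_offdiag_norm_mult_le:
  fixes g :: "'a::ab_group_add \<Rightarrow> real" and c :: "'a \<Rightarrow> complex"
  assumes "\<And>x. g x \<ge> 0" and "\<And>x. g (- x) = g x"
    and "\<And>i. i \<in> B \<Longrightarrow> (\<Sum>j\<in>B. if i = j then 0 else g (i - j)) \<le> H"
  shows "(\<Sum>i\<in>B. \<Sum>j\<in>B. if i = j then 0 else cmod (c i) * cmod (c j) * g (i - j))
           \<le> H * (\<Sum>i\<in>B. (cmod (c i))\<^sup>2)"
proof -
  define a where "a i = (cmod (c i))\<^sup>2" for i
  define T where "T = (\<Sum>i\<in>B. \<Sum>j\<in>B. if i = j then 0 else a i * g (i - j))"
  have "(\<Sum>i\<in>B. \<Sum>j\<in>B. if i = j then 0 else cmod (c i) * cmod (c j) * g (i - j))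
          \<le> (\<Sum>i\<in>B. \<Sum>j\<in>B. (if i = j then 0 else a i * g (i - j)) / 2
                               + (if i = j then 0 else a j * g (i - j)) / 2)"
  proof (intro sum_mono)
    fix i j
    have "cmod (c i) * cmod (c j) \<le> (a i + a j) / 2"
      unfolding a_def using sum_squares_bound[of "cmod (c i)" "cmod (c j)"]
      by (simp add: power2_eq_square)
    hence "cmod (c i) * cmod (c j) * g (i - j) \<le> (a i + a j) / 2 * g (i - j)"
      using assms(1) by (rule mult_right_mono)
    thus "(if i = j then 0 else cmod (c i) * cmod (c j) * g (i - j))
            \<le> (if i = j then 0 else a i * g (i - j)) / 2 + (if i = j then 0 else a j * g (i - j)) / 2"
      by (auto simp: field_simps)
  qed
  also have "\<dots> = T / 2 + (\<Sum>i\<in>B. \<Sum>j\<in>B. if i = j then 0 else a j * g (i - j)) / 2"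
    unfolding T_def by (simp add: sum.distrib sum_divide_distrib)
  also have "(\<Sum>i\<in>B. \<Sum>j\<in>B. if i = j then 0 else a j * g (i - j)) = T"
    unfolding T_def by (subst sum.swap) (intro sum.cong refl, metis assms(2) minus_diff_eq)
  also have "T = (\<Sum>i\<in>B. a i * (\<Sum>j\<in>B. if i = j then 0 else g (i - j)))"
    unfolding T_def by (simp add: sum_distrib_left if_distrib cong: if_cong)
  also have "\<dots> \<le> (\<Sum>i\<in>B. a i * H)"
    by (intro sum_mono mult_left_mono assms(3)) (auto simp: a_def)
  finally show ?thesis
    by (simp add: a_def sum_distrib_left mult.commute)
qed

text \<open>Diagonal dominance of the Gram matrix of the exponentials on \<open>S\<close>.\<close>

lemma set_integral_norm_sum_exp_freq_sq_ge:
  assumes S: "S \<in> lmeasurable" and "finite B"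
    and H: "\<And>i. i \<in> B \<Longrightarrow> (\<Sum>j\<in>B. if i = j then 0 else cmod (set_exp_integral S (i - j))) \<le> H"
  shows "(measure lebesgue S - H) * (\<Sum>m\<in>B. (cmod (c m))\<^sup>2)
           \<le> (LINT t:S|lebesgue. (cmod (\<Sum>m\<in>B. c m * exp_freq m t))\<^sup>2)"
proof -
  define Q where "Q = (LINT t:S|lebesgue. (cmod (\<Sum>m\<in>B. c m * exp_freq m t))\<^sup>2)"
  define Off where
    "Off = (\<Sum>i\<in>B. \<Sum>j\<in>B. if i = j then 0 else c i * cnj (c j) * set_exp_integral S (i - j))"
  have "complex_of_real Q = (\<Sum>i\<in>B. \<Sum>j\<in>B. c i * cnj (c j) * set_exp_integral S (id i - id j))"
    unfolding Q_def using set_integral_norm_sum_exp_freq_sq[OF S, of c id B] by simp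
  also have "\<dots> = (\<Sum>i\<in>B. \<Sum>j\<in>B. (if i = j then c i * cnj (c j) * set_exp_integral S (i - j) else 0)
                          + (if i = j then 0 else c i * cnj (c j) * set_exp_integral S (i - j)))"
    by (intro sum.cong refl) auto
  also have "\<dots> = (\<Sum>i\<in>B. c i * cnj (c i) * set_exp_integral S 0) + Off"
    unfolding Off_def using \<open>finite B\<close> by (simp add: sum.distrib)
  also have "(\<Sum>i\<in>B. c i * cnj (c i) * set_exp_integral S 0)
               = complex_of_real (measure lebesgue S * (\<Sum>i\<in>B. (cmod (c i))\<^sup>2))"
    by (simp add: set_exp_integral_zero[OF S] sum_distrib_left complex_norm_square[symmetric] mult.commute)
  finally have Q: "Q = measure lebesgue S * (\<Sum>i\<in>B. (cmod (c i))\<^sup>2) + Re Off"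
    by (metis Re_complex_of_real plus_complex.sel(1))
  have "cmod Off \<le> (\<Sum>i\<in>B. \<Sum>j\<in>B. if i = j then 0
                     else cmod (c i) * cmod (c j) * cmod (set_exp_integral S (i - j)))"
    unfolding Off_def
    by (rule order.trans[OF norm_sum sum_mono[OF order.trans[OF norm_sum sum_mono]]])
       (simp add: norm_mult)
  also have "\<dots> \<le> H * (\<Sum>i\<in>B. (cmod (c i))\<^sup>2)"
    using H by (intro sum_offdiag_norm_mult_le) (auto simp: set_exp_integral_uminus)
  finally show ?thesis
    using Q abs_Re_le_cmod[of Off] unfolding Q_def by (simp add: left_diff_distrib)
qed

lemma sum_offdiag_dilation_le:
  fixes l N :: nat and g :: "int \<Rightarrow> real"
  assumes "l \<ge> 1" and g: "\<And>x. g x \<ge> 0" and i: "i \<in> (\<lambda>k. int k * int l) ` {1..N}"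
  shows "(\<Sum>j\<in>(\<lambda>k. int k * int l) ` {1..N}. if i = j then 0 else g (i - j))
           \<le> (\<Sum>d\<in>{-int N..int N} - {0}. g (d * int l))"
proof -
  let ?B = "(\<lambda>k. int k * int l) ` {1..N}"
  let ?D = "{-int N..int N} - {0}"
  have "(\<Sum>j\<in>?B. if i = j then 0 else g (i - j)) = (\<Sum>j\<in>?B - {i}. g (i - j))"
    by (simp add: sum.If_cases Diff_eq Int_commute flip: Compl_eq)
  also have "\<dots> = (\<Sum>x\<in>(\<lambda>j. i - j) ` (?B - {i}). g x)"
    by (subst sum.reindex) (auto simp: inj_on_def)
  also have "\<dots> \<le> (\<Sum>x\<in>(\<lambda>d. d * int l) ` ?D. g x)"
  proof (rule sum_mono2)
    show "(\<lambda>j. i - j) ` (?B - {i}) \<subseteq> (\<lambda>d. d * int l) ` ?D"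
    proof
      fix x assume "x \<in> (\<lambda>j. i - j) ` (?B - {i})"
      then obtain j where j: "j \<in> ?B" "j \<noteq> i" and x: "x = i - j"
        by auto
      obtain k k' where k: "k \<in> {1..N}" "i = int k * int l" and k': "k' \<in> {1..N}" "j = int k' * int l"
        using i j by auto
      have "x = (int k - int k') * int l"
        using x k k' by (simp add: algebra_simps)
      moreover have "int k - int k' \<in> ?D"
        using k k' j by auto
      ultimately show "x \<in> (\<lambda>d. d * int l) ` ?D"
        by blast
    qed
  qed (use g in auto)
  also have "\<dots> = (\<Sum>d\<in>?D. g (d * int l))"
    using assms(1) by (subst sum.reindex) (auto simp: inj_on_def)
  finally show ?thesis .
qed

lemma lower_riesz_bound_dilation:
  fixes l N :: nat
  assumes "S \<in> sets lebesgue" and "S \<subseteq> {0..<2*pi}" and "measure lebesgue S > 0" and "l \<ge> 1"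
    and small: "(\<Sum>d\<in>{-int N..int N} - {0}. cmod (set_exp_integral S (d * int l))) \<le> measure lebesgue S / 2"
  shows "lower_riesz_bound S ((\<lambda>k. int k * int l) ` {1..N}) (measure lebesgue S / (4 * pi))"
  unfolding lower_riesz_bound_def
proof (intro conjI allI)
  let ?B = "(\<lambda>k. int k * int l) ` {1..N}"
  show "measure lebesgue S / (4 * pi) > 0"
    using assms(3) by simp
  fix c :: "int \<Rightarrow> complex"
  have "(measure lebesgue S - measure lebesgue S / 2) * (\<Sum>m\<in>?B. (cmod (c m))\<^sup>2)
          \<le> (LINT t:S|lebesgue. (cmod (\<Sum>m\<in>?B. c m * exp_freq m t))\<^sup>2)"
  proof (rule set_integral_norm_sum_exp_freq_sq_ge)
    show "S \<in> lmeasurable"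
      by (rule fmeasurableI2[OF lmeasurable_atLeastLessThan assms(2,1)])
    show "(\<Sum>j\<in>?B. if i = j then 0 else cmod (set_exp_integral S (i - j))) \<le> measure lebesgue S / 2"
      if "i \<in> ?B" for i
      using sum_offdiag_dilation_le[OF assms(4) _ that, of "\<lambda>x. cmod (set_exp_integral S x)"] small
      by simp
  qed simp
  thus "(LINT t:S|lebesgue. (cmod (\<Sum>m\<in>?B. c m * exp (\<i> * of_int m * of_real t)))\<^sup>2 / (2 * pi))
          \<ge> measure lebesgue S / (4 * pi) * (\<Sum>m\<in>?B. (cmod (c m))\<^sup>2)"
    unfolding exp_freq_def by (simp add: field_simps)
qed

lemma card_dilation_fiber_le:
  fixes n :: int and L :: "nat set" and D :: "int set"
  assumes "n \<noteq> 0"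
  shows "card {x \<in> L \<times> D. snd x * int (fst x) = n} \<le> divisor_count (nat \<bar>n\<bar>)"
  unfolding divisor_count_def
proof (rule card_inj_on_le[of fst])
  show "inj_on fst {x \<in> L \<times> D. snd x * int (fst x) = n}"
    using assms by (auto simp: inj_on_def prod_eq_iff)
  show "fst ` {x \<in> L \<times> D. snd x * int (fst x) = n} \<subseteq> {k. k dvd nat \<bar>n\<bar>}"
  proof
    fix k assume "k \<in> fst ` {x \<in> L \<times> D. snd x * int (fst x) = n}"
    then obtain d where "d * int k = n"
      by auto
    hence "int k dvd int (nat \<bar>n\<bar>)"
      by auto
    thus "k \<in> {k. k dvd nat \<bar>n\<bar>}"
      by (simp only: int_dvd_int_iff mem_Collect_eq)
  qed
  show "finite {k. k dvd nat \<bar>n\<bar>}"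
    using assms by (simp del: dvd_nat_abs_iff)
qed

section \<open>Choosing the dilation\<close>

text \<open>Each product \<open>n = d l\<close> arises from at most \<open>d(|n|)\<close> pairs \<open>(l, d)\<close>, so Bessel's
  inequality applies to the set of all products at the cost of the divisor bound.\<close>

lemma sum_dilated_set_exp_integral_sq_le:
  fixes M N :: nat
  assumes S: "S \<in> sets lebesgue" "S \<subseteq> {0..<2*pi}" and "R \<ge> 0"
    and divisors: "\<And>n. 0 < n \<Longrightarrow> n \<le> N * M \<Longrightarrow> real (divisor_count n) \<le> R"
  shows "(\<Sum>l=1..M. \<Sum>d\<in>{-int N..int N} - {0}. (cmod (set_exp_integral S (d * int l)))\<^sup>2)
           \<le> R * (2 * pi * measure lebesgue S)"
proof -
  define X where "X = {1..M} \<times> ({-int N..int N} - {0})"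
  define f where "f = (\<lambda>(l::nat, d::int). d * int l)"
  define h where "h n = (cmod (set_exp_integral S n))\<^sup>2" for n
  have "finite X"
    unfolding X_def by simp
  have "(\<Sum>l=1..M. \<Sum>d\<in>{-int N..int N} - {0}. h (d * int l)) = (\<Sum>x\<in>X. h (f x))"
    unfolding X_def f_def by (simp add: sum.cartesian_product split_def)
  also have "\<dots> = (\<Sum>n\<in>f ` X. real (card {x \<in> X. f x = n}) * h n)"
    using sum.image_gen[OF \<open>finite X\<close>, of "\<lambda>x. h (f x)" f] by simp
  also have "\<dots> \<le> (\<Sum>n\<in>f ` X. R * h n)"
  proof (intro sum_mono mult_right_mono)
    fix n assume "n \<in> f ` X"
    then obtain l d where "(l, d) \<in> X" and "n = d * int l"
      unfolding f_def by auto
    hence ld: "l \<in> {1..M}" "d \<in> {-int N..int N} - {0}" "n = d * int l"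
      unfolding X_def by auto
    have "\<bar>n\<bar> \<le> int N * int M"
      using ld by (auto simp: abs_mult intro: mult_mono)
    hence "nat \<bar>n\<bar> \<le> N * M"
      by (simp add: nat_le_iff)
    moreover have "n \<noteq> 0"
      using ld by simp
    moreover have "card {x \<in> X. f x = n} \<le> divisor_count (nat \<bar>n\<bar>)"
      unfolding X_def f_def using card_dilation_fiber_le[OF \<open>n \<noteq> 0\<close>] by (simp add: split_def)
    ultimately show "real (card {x \<in> X. f x = n}) \<le> R"
      using divisors[of "nat \<bar>n\<bar>"] by (simp add: order.trans[OF of_nat_mono])
  qed (simp add: h_def)
  also have "\<dots> = R * (\<Sum>n\<in>f ` X. h n)"
    by (simp add: sum_distrib_left)
  also have "\<dots> \<le> R * (2 * pi * measure lebesgue S)"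
    unfolding h_def using \<open>finite X\<close> \<open>R \<ge> 0\<close>
    by (intro mult_left_mono sum_norm_set_exp_integral_sq_le[OF S]) auto
  finally show ?thesis
    unfolding h_def .
qed

lemma ex_le_average:
  fixes f :: "'a \<Rightarrow> real"
  assumes "finite L" and "L \<noteq> {}"
  obtains l where "l \<in> L" and "f l \<le> (\<Sum>l\<in>L. f l) / card L"
proof (rule ccontr)
  assume "\<not> thesis"
  hence "(\<Sum>l\<in>L. (\<Sum>l\<in>L. f l) / card L) < (\<Sum>l\<in>L. f l)"
    using that by (intro sum_strict_mono[OF assms]) (meson not_le)
  thus False
    using assms by simp
qed

text \<open>Averaging over \<open>l \<le> M\<close> and then Cauchy-Schwarz over the \<open>2 N\<close> differences \<open>d\<close>
  turn the budget \<open>16 pi N R \<le> |S| M\<close> into the hypothesis of \<open>lower_riesz_bound_dilation\<close>.\<close>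

lemma ex_dilation_lower_riesz_bound:
  fixes M N :: nat
  assumes S: "S \<in> sets lebesgue" "S \<subseteq> {0..<2*pi}" and \<mu>: "measure lebesgue S > 0"
    and "M \<ge> 1" and "N \<ge> 1"
    and divisors: "\<And>n. 0 < n \<Longrightarrow> n \<le> N * M \<Longrightarrow> real (divisor_count n) \<le> R"
    and budget: "16 * pi * real N * R \<le> measure lebesgue S * real M"
  obtains l where "l \<in> {1..M}"
    and "lower_riesz_bound S ((\<lambda>k. int k * int l) ` {1..N}) (measure lebesgue S / (4 * pi))"
proof -
  define \<mu> where "\<mu> = measure lebesgue S"
  define D where "D = {-int N..int N} - {0}"
  define V where "V l = (\<Sum>d\<in>D. (cmod (set_exp_integral S (d * int l)))\<^sup>2)" for l
  have "R \<ge> 0"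
    using divisors[of 1] \<open>M \<ge> 1\<close> \<open>N \<ge> 1\<close> by (simp add: divisor_count_def)
  obtain l where l: "l \<in> {1..M}" and average: "V l \<le> (\<Sum>l=1..M. V l) / card {1..M}"
    using ex_le_average[of "{1..M}" V] \<open>M \<ge> 1\<close> by auto
  note average
  also have "\<dots> \<le> R * (2 * pi * \<mu>) / M"
    using sum_dilated_set_exp_integral_sq_le[OF S \<open>R \<ge> 0\<close> divisors]
    unfolding V_def D_def \<mu>_def by (simp add: divide_right_mono)
  also have "\<dots> \<le> \<mu>\<^sup>2 / (8 * N)"
    using budget \<open>M \<ge> 1\<close> \<open>N \<ge> 1\<close> \<mu> unfolding \<mu>_def by (simp add: field_simps power2_eq_square)
  finally have V: "V l \<le> \<mu>\<^sup>2 / (8 * N)" .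
  have "(\<Sum>d\<in>D. cmod (set_exp_integral S (d * int l)))\<^sup>2 \<le> V l * card D"
    unfolding V_def by (rule sum_squared_le_sum_of_squares)
  also have "\<dots> \<le> \<mu>\<^sup>2 / (8 * N) * (2 * N)"
    using mult_right_mono[OF V, of "real (card D)"] by (simp add: D_def)
  also have "\<dots> = (\<mu> / 2)\<^sup>2"
    using \<open>N \<ge> 1\<close> by (simp add: power_divide)
  finally have "(\<Sum>d\<in>D. cmod (set_exp_integral S (d * int l))) \<le> \<mu> / 2"
    by (rule power2_le_imp_le) (use \<mu> in \<open>simp add: \<mu>_def\<close>)
  hence "lower_riesz_bound S ((\<lambda>k. int k * int l) ` {1..N}) (measure lebesgue S / (4 * pi))"
    using l unfolding D_def \<mu>_def by (intro lower_riesz_bound_dilation[OF S \<mu>]) auto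
  with l show ?thesis
    by (rule that)
qed

lemma eventually_mult_powr_add_one_le_powr:
  fixes a b K :: real
  assumes "a < b" and "0 < b"
  shows "eventually (\<lambda>N::nat. K * real N powr a + 1 \<le> real N powr b) sequentially"
proof -
  have "(\<lambda>N::nat. real N powr a) \<in> o(\<lambda>N. real N powr b)"
    and "(\<lambda>N::nat. real N powr 0) \<in> o(\<lambda>N. real N powr b)"
    using assms powr_smallo_iff[OF filterlim_real_sequentially sequentially_bot] by blast+
  hence "(\<lambda>N::nat. K * real N powr a + real N powr 0) \<in> o(\<lambda>N. real N powr b)"
    by (intro sum_in_smallo) (simp_all add: cmult_in_smallo_iff)
  hence "eventually (\<lambda>N. norm (K * real N powr a + real N powr 0) \<le> 1 * norm (real N powr b)) sequentially"
    by (rule landau_o.smallD) simp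
  moreover have "eventually (\<lambda>N::nat. N \<ge> 1) sequentially"
    by (rule eventually_ge_at_top)
  ultimately show ?thesis
    by eventually_elim auto
qed

text \<open>With \<open>\<epsilon> = (\<alpha> - 1) / (2 (\<alpha> + 1))\<close> and \<open>M \<approx> N powr \<alpha>\<close> the divisor bound costs
  \<open>(N M) powr \<epsilon> \<le> N powr ((\<alpha> - 1) / 2)\<close>, so the budget only needs
  \<open>N powr ((\<alpha> + 1) / 2) = o(N powr \<alpha>)\<close>.\<close>

lemma ex_dilation_below_powr_lower_riesz_bound:
  fixes N :: nat and \<alpha> C :: real
  assumes S: "S \<in> sets lebesgue" "S \<subseteq> {0..<2*pi}" and \<mu>: "measure lebesgue S > 0"
    and "\<alpha> > 1" and "N \<ge> 2" and "C \<ge> 0"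
    and divisors: "\<And>n. n > 0 \<Longrightarrow> real (divisor_count n) \<le> C * real n powr ((\<alpha> - 1) / (2 * (\<alpha> + 1)))"
    and large: "16 * pi * C / measure lebesgue S * real N powr ((\<alpha> + 1) / 2) + 1 \<le> real N powr \<alpha>"
  shows "\<exists>l\<ge>1. real l < real N powr \<alpha>
           \<and> lower_riesz_bound S ((\<lambda>k. int k * int l) ` {1..N}) (measure lebesgue S / (4 * pi))"
proof -
  define \<epsilon> where "\<epsilon> = (\<alpha> - 1) / (2 * (\<alpha> + 1))"
  define M where "M = nat \<lceil>real N powr \<alpha>\<rceil> - 1"
  define R where "R = C * (real N * real M) powr \<epsilon>"
  have "\<epsilon> \<ge> 0"
    unfolding \<epsilon>_def using \<open>\<alpha> > 1\<close> by simp
  have exponent: "(1 + \<alpha>) * \<epsilon> = (\<alpha> - 1) / 2"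
    unfolding \<epsilon>_def using \<open>\<alpha> > 1\<close> by (simp add: field_simps)
  have "real N powr 1 \<le> real N powr \<alpha>"
    using \<open>N \<ge> 2\<close> \<open>\<alpha> > 1\<close> by (intro powr_mono) auto
  hence "real N powr \<alpha> \<ge> 2"
    using \<open>N \<ge> 2\<close> by simp
  hence M: "real N powr \<alpha> - 1 \<le> real M" "real M < real N powr \<alpha>" "M \<ge> 1"
    unfolding M_def by linarith+
  have "real N * real M \<le> real N powr (1 + \<alpha>)"
    using M(2) \<open>N \<ge> 2\<close> by (simp add: powr_add)
  hence "R \<le> C * (real N powr (1 + \<alpha>)) powr \<epsilon>"
    unfolding R_def using \<open>\<epsilon> \<ge> 0\<close> \<open>C \<ge> 0\<close> by (intro mult_left_mono powr_mono2) auto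
  also have "(real N powr (1 + \<alpha>)) powr \<epsilon> = real N powr ((\<alpha> - 1) / 2)"
    unfolding powr_powr exponent ..
  finally have "16 * pi * real N * R \<le> 16 * pi * C * (real N * real N powr ((\<alpha> - 1) / 2))"
    using \<open>N \<ge> 2\<close> by (simp add: mult_left_mono)
  also have "real N * real N powr ((\<alpha> - 1) / 2) = real N powr (1 + (\<alpha> - 1) / 2)"
    using \<open>N \<ge> 2\<close> by (simp add: powr_mult_base)
  also have "1 + (\<alpha> - 1) / 2 = (\<alpha> + 1) / 2"
    by (simp add: field_simps)
  also have "16 * pi * C * real N powr ((\<alpha> + 1) / 2) \<le> measure lebesgue S * (real N powr \<alpha> - 1)"
  proof -
    have "16 * pi * C / measure lebesgue S * real N powr ((\<alpha> + 1) / 2) \<le> real N powr \<alpha> - 1"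
      using large by linarith
    thus ?thesis
      using \<mu> by (simp add: field_simps)
  qed
  also have "\<dots> \<le> measure lebesgue S * real M"
    using M(1) \<mu> by simp
  finally have budget: "16 * pi * real N * R \<le> measure lebesgue S * real M" .
  have "real (divisor_count n) \<le> R" if "0 < n" "n \<le> N * M" for n
  proof -
    have "real n powr \<epsilon> \<le> (real N * real M) powr \<epsilon>"
      using that \<open>\<epsilon> \<ge> 0\<close> by (intro powr_mono2) (auto simp flip: of_nat_mult)
    thus ?thesis
      using divisors[OF that(1)] \<open>C \<ge> 0\<close> unfolding R_def \<epsilon>_def
      by (meson mult_left_mono order.trans)
  qed
  then obtain l where "l \<in> {1..M}"
    and "lower_riesz_bound S ((\<lambda>k. int k * int l) ` {1..N}) (measure lebesgue S / (4 * pi))"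
    using ex_dilation_lower_riesz_bound[OF S \<mu> M(3) _ _ budget] \<open>N \<ge> 2\<close> by auto
  thus ?thesis
    using M(2) by (intro exI[of _ l]) auto
qed

theorem lemma11:
  fixes S :: "real set"
  assumes "S \<subseteq> {0..<2*pi}" and "S \<in> sets lebesgue" and "emeasure lebesgue S > 0"
  shows "\<exists>\<gamma>>0. \<forall>\<alpha>::real. \<alpha> > 1 \<longrightarrow>
           (\<exists>N\<^sub>0::nat. \<forall>N::nat. N \<ge> N\<^sub>0 \<longrightarrow>
              (\<exists>l::nat. l \<ge> 1 \<and> real l < real N powr \<alpha> \<and>
                 lower_riesz_bound S ((\<lambda>k. int k * int l) ` {1..N}) \<gamma>))"
proof (intro exI[of _ "measure lebesgue S / (4 * pi)"] conjI allI impI)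
  have "S \<in> lmeasurable"
    by (rule fmeasurableI2[OF lmeasurable_atLeastLessThan assms(1,2)])
  hence \<mu>: "measure lebesgue S > 0"
    using assms(3) unfolding emeasure_eq_measure2[OF \<open>S \<in> lmeasurable\<close>] by simp
  then show "measure lebesgue S / (4 * pi) > 0"
    by simp
  fix \<alpha> :: real assume "\<alpha> > 1"
  obtain C where "C > 0"
    and divisors: "\<And>n. n > 0 \<Longrightarrow> real (divisor_count n) \<le> C * real n powr ((\<alpha> - 1) / (2 * (\<alpha> + 1)))"
    using divisor_count_le_powr[of "(\<alpha> - 1) / (2 * (\<alpha> + 1))"] \<open>\<alpha> > 1\<close> by auto
  have "eventually (\<lambda>N. 16 * pi * C / measure lebesgue S * real N powr ((\<alpha> + 1) / 2) + 1 \<le> real N powr \<alpha>) sequentially"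
    using \<open>\<alpha> > 1\<close> by (intro eventually_mult_powr_add_one_le_powr) auto
  moreover have "eventually (\<lambda>N::nat. N \<ge> 2) sequentially"
    by (rule eventually_ge_at_top)
  ultimately have "eventually (\<lambda>N. \<exists>l\<ge>1. real l < real N powr \<alpha>
                     \<and> lower_riesz_bound S ((\<lambda>k. int k * int l) ` {1..N}) (measure lebesgue S / (4 * pi))) sequentially"
  proof eventually_elim
    case (elim N)
    then show ?case
      using \<open>C > 0\<close>
      by (intro ex_dilation_below_powr_lower_riesz_bound[OF assms(2,1) \<mu> \<open>\<alpha> > 1\<close> _ _ divisors]) auto
  qed
  thus "\<exists>N\<^sub>0. \<forall>N\<ge>N\<^sub>0. \<exists>l\<ge>1. real l < real N powr \<alpha>
          \<and> lower_riesz_bound S ((\<lambda>k. int k * int l) ` {1..N}) (measure lebesgue S / (4 * pi))"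
    by (simp add: eventually_sequentially)
qed

end
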